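(* Fix $n\ge 2$, a dictator agent $t$, another agent $i\ne t$, and a constant $a\in(0,\frac12)$. For $b\in(0,1)$ and a profile $\mathbf{x}$ with $x_l=\min\mathbf{x}$, $x_r=\max\mathbf{x}$, $L=x_r-x_l$, define $$h_b(\mathbf{x})=\begin{cases} x_t+\max\left\{\frac{2(1-b)}{b}(x_t-x_l),\; x_r-x_t\right\} & \text{if } x_t\in[x_l,\,x_l+bL),\\[2pt] x_t-\max\left\{x_t-x_l,\; \frac{2b}{1-b}(x_r-x_t)\right\} & \text{if } x_t\in[x_l+bL,\,x_r].\end{cases}$$ Let $f$ be the mechanism that on $\mathbf{x}$ outputs $l_1=x_t$ and $l_2=h_a(\mathbf{x})$ if $x_i\le x_t$, and $l_2=h_{1-a}(\mathbf{x})$ if $x_i>x_t$. Then $f$ is strategy-proof.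
   Context: Two-facility game on a line: agent $j\in\{1,\dots,n\}$ has location $x_j\in\mathbb{R}$. A mechanism outputs two facility locations $\{l_1,l_2\}$; an agent at $y$ has cost $\min\{|l_1-y|,|l_2-y|\}$. A mechanism $f$ is strategy-proof if for every agent $j$, every profile $\mathbf{x}=\langle x_j,\mathbf{x}_{-j}\rangle$ and every $x_j'\in\mathbb{R}$, the cost of agent $j$ (at true location $x_j$) under $f(x_j,\mathbf{x}_{-j})$ is at most her cost under $f(x_j',\mathbf{x}_{-j})$. *)

theory Defs
  imports Complex_Main
begin

text \<open>Agents are indexed by {1..n}; a profile is a function from agents to locations
  (values outside {1..n} are irrelevant). A mechanism maps a profile to a pair of
  facility locations (l1, l2).\<close>

definition agents :: "nat \<Rightarrow> nat set" where
  "agents n = {1..n}"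

definition cost :: "real \<times> real \<Rightarrow> real \<Rightarrow> real" where
  "cost ls y = min \<bar>fst ls - y\<bar> \<bar>snd ls - y\<bar>"

definition strategy_proof :: "nat \<Rightarrow> ((nat \<Rightarrow> real) \<Rightarrow> real \<times> real) \<Rightarrow> bool" where
  "strategy_proof n f \<longleftrightarrow>
     (\<forall>j\<in>agents n. \<forall>x :: nat \<Rightarrow> real. \<forall>x' :: real.
        cost (f x) (x j) \<le> cost (f (x(j := x'))) (x j))"

definition h :: "nat \<Rightarrow> nat \<Rightarrow> real \<Rightarrow> (nat \<Rightarrow> real) \<Rightarrow> real" where
  "h n t b x =
    (let xl = Min (x ` agents n); xr = Max (x ` agents n); L = xr - xl in
     if xl \<le> x t \<and> x t < xl + b * L
     then x t + max (2 * (1 - b) / b * (x t - xl)) (xr - x t)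
     else x t - max (x t - xl) (2 * b / (1 - b) * (xr - x t)))"

definition mech :: "nat \<Rightarrow> nat \<Rightarrow> nat \<Rightarrow> real \<Rightarrow> (nat \<Rightarrow> real) \<Rightarrow> real \<times> real" where
  "mech n t i a x = (x t, if x i \<le> x t then h n t a x else h n t (1 - a) x)"

end

theory Submission
  imports Defs
begin

(* Agent t always gets a facility at her own location, so only an agent j \<noteq> t can hope to gain.
   Measured from x_t, h_b puts the second facility at second_offset k p q, where k = b/(1-b) and
   p, q are the distances from x_t to the leftmost and rightmost agents: at max (2p/k) q to the
   right if p < k q, at -max p (2kq) to the left otherwise.  A report v of j changes only her own
   contribution to p and q, and changes k only if j = i: reporting on her true side of x_t keeps k,
   crossing to the left can only lower it, crossing to the right can only raise it.  Under these
   constraints a misreport either leaves x_t as her nearest facility, which is the worst outcome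
   she can get anyway, or moves the second facility farther away from x_j. *)

lemma cost_translate: "cost (c, c + z) y = cost (0, z) (y - c)"
  by (simp add: cost_def)

lemma cost_le_cost:
  assumes "\<bar>e\<bar> \<le> \<bar>z' - e\<bar> \<or> z = e \<or> e \<le> z \<and> z \<le> z' \<or> z' \<le> z \<and> z \<le> e"
  shows "cost (0, z) e \<le> cost (0, z') e"
  using assms by (auto simp: cost_def)

definition second_offset :: "real \<Rightarrow> real \<Rightarrow> real \<Rightarrow> real" where
  "second_offset k p q = (if p < k * q then max (2 * p / k) q else - max p (2 * k * q))"

lemma second_offset_right: "p < k * q \<Longrightarrow> second_offset k p q = max (2 * p / k) q"
  by (simp add: second_offset_def)

lemma second_offset_left: "\<not> p < k * q \<Longrightarrow> second_offset k p q = - max p (2 * k * q)"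
  by (simp add: second_offset_def)

lemma offset_no_gain_pos:
  fixes k k' P Q e w :: real
  assumes k: "0 < k" "0 < k'" and PQ: "0 \<le> P" "0 \<le> Q" and e: "0 < e"
    and left_dev: "w \<le> 0 \<Longrightarrow> k' \<le> k" and right_dev: "0 < w \<Longrightarrow> k' = k"
  shows "cost (0, second_offset k (max P (-e)) (max Q e)) e
       \<le> cost (0, second_offset k' (max P (-w)) (max Q w)) e"
proof -
  define p' q' where "p' = max P (-w)" and "q' = max Q w"
  define z z' where "z = second_offset k P (max Q e)" and "z' = second_offset k' p' q'"
  have "k' \<le> k" using left_dev right_dev by (cases "w \<le> 0") auto
  have "P \<le> p'" by (simp add: p'_def)
  have "\<bar>e\<bar> \<le> \<bar>z' - e\<bar> \<or> z = e \<or> e \<le> z \<and> z \<le> z'"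
  proof (cases "p' < k' * q'")
    case False
    then have "z' \<le> 0" using PQ by (simp add: z'_def second_offset_left p'_def le_max_iff_disj)
    then show ?thesis using e by simp
  next
    case dev_right: True
    then have z': "z' = max (2 * p' / k') q'" by (simp add: z'_def second_offset_right)
    show ?thesis
    proof (cases "P < k * max Q e")
      case True
      have "2 * P / k \<le> 2 * p' / k'"
        using k PQ \<open>k' \<le> k\<close> \<open>P \<le> p'\<close> by (intro divide_mono) auto
      then show ?thesis using True e by (auto simp: z_def z' q'_def second_offset_right max_def)
    next
      case False
      have "0 < w"
      proof (rule ccontr)
        assume "\<not> 0 < w"
        then have "k' * q' \<le> k * max Q e"
          using \<open>k' \<le> k\<close> k PQ e by (intro mult_mono) (auto simp: q'_def)
        then show False using dev_right False \<open>P \<le> p'\<close> by linarith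
      qed
      then have "p' = P" "k' = k" using PQ right_dev by (auto simp: p'_def)
      have "k * e \<le> P" using False k mult_left_mono[of e "max Q e" k] by linarith
      then have "2 * e \<le> 2 * P / k" using k by (simp add: field_simps)
      then have "2 * e \<le> z'" using \<open>p' = P\<close> \<open>k' = k\<close> by (simp add: z')
      then show ?thesis using e by simp
    qed
  qed
  then have "cost (0, z) e \<le> cost (0, z') e" by (intro cost_le_cost) auto
  then show ?thesis using PQ e by (simp add: z_def z'_def p'_def q'_def)
qed

lemma offset_no_gain_nonpos:
  fixes k k' P Q e w :: real
  assumes k: "0 < k" "0 < k'" and PQ: "0 \<le> P" "0 \<le> Q" and e: "e \<le> 0"
    and right_dev: "0 < w \<Longrightarrow> k \<le> k'" and left_dev: "w \<le> 0 \<Longrightarrow> k' = k"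
  shows "cost (0, second_offset k (max P (-e)) (max Q e)) e
       \<le> cost (0, second_offset k' (max P (-w)) (max Q w)) e"
proof -
  define p p' q' where "p = max P (-e)" and "p' = max P (-w)" and "q' = max Q w"
  define z z' where "z = second_offset k p Q" and "z' = second_offset k' p' q'"
  have "k \<le> k'" using left_dev right_dev by (cases "w \<le> 0") auto
  then have "k * Q \<le> k' * q'" using k PQ by (intro mult_mono) (auto simp: q'_def)
  have "\<bar>e\<bar> \<le> \<bar>z' - e\<bar> \<or> z = e \<or> z' \<le> z \<and> z \<le> e"
  proof (cases "p' < k' * q'")
    case True
    then have "0 \<le> z'" using PQ by (simp add: z'_def second_offset_right q'_def le_max_iff_disj)
    then show ?thesis using e by simp
  next
    case dev_left: False
    then have z': "z' = - max p' (2 * k' * q')" by (simp add: z'_def second_offset_left)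
    show ?thesis
    proof (cases "p < k * Q")
      case True
      have "w \<le> 0"
      proof (rule ccontr)
        assume "\<not> w \<le> 0"
        then have "p' \<le> p" using PQ by (simp add: p_def p'_def)
        then show False using True dev_left \<open>k * Q \<le> k' * q'\<close> by linarith
      qed
      then have "q' = Q" "k' = k" using left_dev PQ by (auto simp: q'_def)
      moreover have "- e \<le> p" by (simp add: p_def)
      ultimately have "z' \<le> 2 * e" using True by (simp add: z')
      then show ?thesis using e by simp
    next
      case False
      then have z: "z = - max p (2 * k * Q)" by (simp add: z_def second_offset_left)
      have "P \<le> p'" by (simp add: p'_def)
      then have "z = e \<or> z' \<le> z"
        using \<open>k * Q \<le> k' * q'\<close> by (auto simp: z z' p_def max_def)
      moreover have "z \<le> e" by (simp add: z p_def)
      ultimately show ?thesis by auto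
    qed
  qed
  then have "cost (0, z) e \<le> cost (0, z') e" by (intro cost_le_cost) auto
  then show ?thesis using PQ e by (simp add: z_def z'_def p_def p'_def q'_def)
qed

lemma offset_no_gain:
  fixes k k' P Q e w :: real
  assumes "0 < k" "0 < k'" "0 \<le> P" "0 \<le> Q"
    and "(0 < e) = (0 < w) \<Longrightarrow> k' = k"
    and "w \<le> 0 \<Longrightarrow> 0 < e \<Longrightarrow> k' \<le> k"
    and "e \<le> 0 \<Longrightarrow> 0 < w \<Longrightarrow> k \<le> k'"
  shows "cost (0, second_offset k (max P (-e)) (max Q e)) e
       \<le> cost (0, second_offset k' (max P (-w)) (max Q w)) e"
proof (cases "0 < e")
  case True
  then show ?thesis using assms by (intro offset_no_gain_pos) auto
next
  case False
  then show ?thesis using assms by (intro offset_no_gain_nonpos) auto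
qed

definition odds :: "real \<Rightarrow> real" where
  "odds b = b / (1 - b)"

lemma odds_pos: "0 < b \<Longrightarrow> b < 1 \<Longrightarrow> 0 < odds b"
  by (simp add: odds_def)

lemma odds_mono: "0 < b \<Longrightarrow> b \<le> b' \<Longrightarrow> b' < 1 \<Longrightarrow> odds b \<le> odds b'"
  by (simp add: odds_def frac_le)

lemma h_eq_second_offset:
  assumes "t \<in> agents n" "0 < b" "b < 1"
  shows "h n t b x = x t + second_offset (odds b) (x t - Min (x ` agents n)) (Max (x ` agents n) - x t)"
proof -
  define xl xr where "xl = Min (x ` agents n)" and "xr = Max (x ` agents n)"
  have "xl \<le> x t" using assms(1) by (simp add: xl_def agents_def)
  have split: "x t < xl + b * (xr - xl) \<longleftrightarrow> x t - xl < odds b * (xr - x t)"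
  proof -
    have "x t < xl + b * (xr - xl) \<longleftrightarrow> (1 - b) * (x t - xl) < b * (xr - x t)"
      by (simp add: algebra_simps)
    also have "\<dots> \<longleftrightarrow> x t - xl < odds b * (xr - x t)"
      using assms by (simp add: odds_def field_simps)
    finally show ?thesis .
  qed
  have right: "2 * (1 - b) / b * y = 2 * y / odds b" for y
    using assms by (simp add: odds_def field_simps)
  have left: "2 * b / (1 - b) * y = 2 * odds b * y" for y
    by (simp add: odds_def)
  show ?thesis
    using \<open>xl \<le> x t\<close> unfolding h_def Let_def second_offset_def
    unfolding xl_def[symmetric] xr_def[symmetric] split right left by simp
qed

lemma Min_Max_image_remove:
  fixes x :: "'a \<Rightarrow> 'b :: linorder"
  assumes "finite A" "j \<in> A" "t \<in> A" "j \<noteq> t"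
  shows "Min (x ` A) = min (Min (x ` (A - {j}))) (x j)"
    and "Max (x ` A) = max (Max (x ` (A - {j}))) (x j)"
    and "Min (x ` (A - {j})) \<le> x t" and "x t \<le> Max (x ` (A - {j}))"
proof -
  have fin: "finite (x ` (A - {j}))" and ne: "x ` (A - {j}) \<noteq> {}" using assms by auto
  have A: "x ` A = insert (x j) (x ` (A - {j}))" using assms by auto
  show "Min (x ` A) = min (Min (x ` (A - {j}))) (x j)"
    unfolding A using Min_insert[OF fin ne] by (simp add: min.commute)
  show "Max (x ` A) = max (Max (x ` (A - {j}))) (x j)"
    unfolding A using Max_insert[OF fin ne] by (simp add: max.commute)
  show "Min (x ` (A - {j})) \<le> x t" "x t \<le> Max (x ` (A - {j}))"
    using fin assms by auto
qed

definition mech_odds :: "nat \<Rightarrow> nat \<Rightarrow> real \<Rightarrow> (nat \<Rightarrow> real) \<Rightarrow> real" where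
  "mech_odds t i a x = odds (if x i \<le> x t then a else 1 - a)"

lemma mech_odds_pos: "0 < a \<Longrightarrow> a < 1 \<Longrightarrow> 0 < mech_odds t i a x"
  by (simp add: mech_odds_def odds_pos)

lemma mech_odds_deviation:
  fixes x :: "nat \<Rightarrow> real"
  assumes "0 < a" "a < 1/2" "j \<noteq> t"
  shows "(0 < x j - x t) = (0 < v - x t) \<Longrightarrow> mech_odds t i a (x(j := v)) = mech_odds t i a x"
    and "v - x t \<le> 0 \<Longrightarrow> 0 < x j - x t \<Longrightarrow> mech_odds t i a (x(j := v)) \<le> mech_odds t i a x"
    and "x j - x t \<le> 0 \<Longrightarrow> 0 < v - x t \<Longrightarrow> mech_odds t i a x \<le> mech_odds t i a (x(j := v))"
  using assms odds_mono[of a "1 - a"] by (cases "j = i"; auto simp: mech_odds_def)+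

lemma cost_mech:
  fixes x :: "nat \<Rightarrow> real"
  assumes "t \<in> agents n" "j \<in> agents n" "j \<noteq> t" "0 < a" "a < 1"
  shows "cost (mech n t i a x) y =
    cost (0, second_offset (mech_odds t i a x)
                (max (x t - Min (x ` (agents n - {j}))) (- (x j - x t)))
                (max (Max (x ` (agents n - {j})) - x t) (x j - x t))) (y - x t)"
proof -
  define b where "b = (if x i \<le> x t then a else 1 - a)"
  have "0 < b" "b < 1" using assms by (auto simp: b_def)
  have "finite (agents n)" by (simp add: agents_def)
  note extremes = Min_Max_image_remove(1,2)[OF this assms(2,1,3), of x]
  have "x t - min m (x j) = max (x t - m) (- (x j - x t))" for m
    by (simp add: min_def max_def)
  then have h: "h n t b x = x t + second_offset (odds b)
                (max (x t - Min (x ` (agents n - {j}))) (- (x j - x t)))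
                (max (Max (x ` (agents n - {j})) - x t) (x j - x t))"
    unfolding h_eq_second_offset[OF assms(1) \<open>0 < b\<close> \<open>b < 1\<close>] extremes
    by (simp only: max_diff_distrib_left)
  have "mech n t i a x = (x t, h n t b x)" by (simp add: mech_def b_def)
  then show ?thesis unfolding h mech_odds_def b_def[symmetric] by (simp add: cost_translate)
qed

lemma deviation_no_gain:
  fixes x :: "nat \<Rightarrow> real"
  assumes "t \<in> agents n" "j \<in> agents n" "j \<noteq> t" "0 < a" "a < 1/2"
  shows "cost (mech n t i a x) (x j) \<le> cost (mech n t i a (x(j := v))) (x j)"
proof -
  have "a < 1" using assms by simp
  have "x(j := v) ` (agents n - {j}) = x ` (agents n - {j})" "(x(j := v)) t = x t"
    using assms(3) by auto
  moreover have "0 \<le> x t - Min (x ` (agents n - {j}))" "0 \<le> Max (x ` (agents n - {j})) - x t"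
    using Min_Max_image_remove(3,4)[of "agents n" j t x] assms(1-3) by (auto simp: agents_def)
  ultimately show ?thesis
    using mech_odds_pos[OF assms(4) \<open>a < 1\<close>]
      mech_odds_deviation[OF assms(4,5,3), where x = x and i = i and v = v]
    by (simp only: cost_mech[OF assms(1-4) \<open>a < 1\<close>] fun_upd_same) (rule offset_no_gain)
qed

theorem theorem7:
  fixes n t i :: nat and a :: real
  assumes "n \<ge> 2" and "t \<in> agents n" and "i \<in> agents n" and "i \<noteq> t"
    and "0 < a" and "a < 1/2"
  shows "strategy_proof n (mech n t i a)"
  unfolding strategy_proof_def
proof (intro ballI allI)
  fix j x v
  assume "j \<in> agents n"
  show "cost (mech n t i a x) (x j) \<le> cost (mech n t i a (x(j := v))) (x j)"
  proof (cases "j = t")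
    case True
    then show ?thesis by (simp add: cost_def mech_def)
  next
    case False
    then show ?thesis using assms \<open>j \<in> agents n\<close> by (intro deviation_no_gain) auto
  qed
qed

end
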